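(* Assume that the exact relative presentation $X_\infty$ satisfies a linear isoperimetric inequality of factor $K$. If $s\in S$ represents an element $a\in H_i$, then $\|a\|\le 12K$, i.e. the word length of $a$ with respect to $S_i$ is at most $12K$.
   Context: Setting. $G=\langle S\mid\mathcal R\rangle$ is a finite presentation with $S$ finite symmetric and relators of length 2 or 3. $H_1,\dots,H_n\le G$, and $S_i\subset S$ is a finite symmetric generating set of $H_i$. $X_\infty$ has generating set $\hat S=S\sqcup H_1\sqcup\dots\sqcup H_n$ (every element of every $H_i$ is a letter) and relators: - the words of $\mathcal R$; - the words $\tilde s^{-1}s$ for $s\in S_i$, where $\tilde s$ is the letter of $H_i$ corresponding to $s$; - for each $i$, all words of at most 3 letters of $H_i$ whose product is trivial in $H_i$. $X_\infty$ satisfies a linear isoperimetric inequality of factor $K$ if every word $w$ over $\hat S$ trivial in $G$ has a Van Kampen diagram over $X_\infty$ with at most $K\,\mathrm{length}(w)$ 2-cells. For $a\in H_i$, the complexity $\|a\|$ is the word length of $a$ with respect to $S_i$. *)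

theory Defs
  imports "HOL-Algebra.Algebra"
begin

text \<open>Signed words: a pair (x, True) is the letter x, (x, False) its formal inverse.\<close>

definition inv_word :: "('a \<times> bool) list \<Rightarrow> ('a \<times> bool) list" where
  "inv_word w = rev (map (\<lambda>(x, b). (x, \<not> b)) w)"

definition free_red_step :: "('a \<times> bool) list \<Rightarrow> ('a \<times> bool) list \<Rightarrow> bool" where
  "free_red_step u v \<longleftrightarrow> (\<exists>p q x b. u = p @ [(x, b), (x, \<not> b)] @ q \<and> v = p @ q)"

definition free_eq :: "('a \<times> bool) list \<Rightarrow> ('a \<times> bool) list \<Rightarrow> bool" where
  "free_eq = (sup free_red_step free_red_step\<inverse>\<inverse>)\<^sup>*\<^sup>*"

definition conj_prod :: "(('a \<times> bool) list \<times> ('a \<times> bool) list \<times> bool) list \<Rightarrow> ('a \<times> bool) list" where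
  "conj_prod cs = concat (map (\<lambda>(u, r, e). u @ (if e then r else inv_word r) @ inv_word u) cs)"

text \<open>w admits a Van Kampen diagram over the relators Rel with at most N 2-cells
  (algebraic form of van Kampen's lemma: w is freely equal to a product of at most
  N conjugates of relators and their inverses).\<close>
definition has_vk_diagram :: "('a \<times> bool) list set \<Rightarrow> ('a \<times> bool) list \<Rightarrow> nat \<Rightarrow> bool" where
  "has_vk_diagram Rel w N \<longleftrightarrow>
     (\<exists>cs. length cs \<le> N \<and> (\<forall>(u, r, e) \<in> set cs. r \<in> Rel) \<and> free_eq w (conj_prod cs))"

definition word_eval :: "('g, 'm) monoid_scheme \<Rightarrow> ('a \<Rightarrow> 'g) \<Rightarrow> ('a \<times> bool) list \<Rightarrow> 'g" where
  "word_eval G f w = foldr (\<lambda>(x, b) acc. (if b then f x else inv\<^bsub>G\<^esub> (f x)) \<otimes>\<^bsub>G\<^esub> acc) w \<one>\<^bsub>G\<^esub>"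

definition symmetric_alph :: "('g, 'm) monoid_scheme \<Rightarrow> ('s \<Rightarrow> 'g) \<Rightarrow> 's set \<Rightarrow> bool" where
  "symmetric_alph G \<iota> A \<longleftrightarrow> (\<forall>s\<in>A. \<exists>t\<in>A. \<iota> t = inv\<^bsub>G\<^esub> (\<iota> s))"

definition is_presentation ::
  "('g, 'm) monoid_scheme \<Rightarrow> ('s \<Rightarrow> 'g) \<Rightarrow> 's set \<Rightarrow> ('s \<times> bool) list set \<Rightarrow> bool" where
  "is_presentation G \<iota> S R \<longleftrightarrow>
     \<iota> ` S \<subseteq> carrier G \<and> generate G (\<iota> ` S) = carrier G \<and>
     R \<subseteq> lists (S \<times> UNIV) \<and>
     (\<forall>w \<in> lists (S \<times> UNIV). word_eval G \<iota> w = \<one>\<^bsub>G\<^esub> \<longleftrightarrow> (\<exists>N. has_vk_diagram R w N))"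

definition word_length :: "('g, 'm) monoid_scheme \<Rightarrow> ('s \<Rightarrow> 'g) \<Rightarrow> 's set \<Rightarrow> 'g \<Rightarrow> nat" where
  "word_length G \<iota> A a = (LEAST k. \<exists>ws \<in> lists A. length ws = k \<and>
      foldr (\<lambda>s acc. \<iota> s \<otimes>\<^bsub>G\<^esub> acc) ws \<one>\<^bsub>G\<^esub> = a)"

text \<open>Letters of X_infinity: S \<squnion> H_1 \<squnion> ... \<squnion> H_n.\<close>
datatype ('s, 'g) xletter = Gen 's | Sub nat 'g

fun xval :: "('s \<Rightarrow> 'g) \<Rightarrow> ('s, 'g) xletter \<Rightarrow> 'g" where
  "xval \<iota> (Gen s) = \<iota> s"
| "xval \<iota> (Sub i h) = h"

definition xletters :: "'s set \<Rightarrow> nat \<Rightarrow> (nat \<Rightarrow> 'g set) \<Rightarrow> ('s, 'g) xletter set" where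
  "xletters S n H = Gen ` S \<union> (\<Union>i\<in>{1..n}. Sub i ` H i)"

definition xrelators ::
  "('g, 'm) monoid_scheme \<Rightarrow> ('s \<Rightarrow> 'g) \<Rightarrow> ('s \<times> bool) list set \<Rightarrow> nat \<Rightarrow> (nat \<Rightarrow> 'g set)
     \<Rightarrow> (nat \<Rightarrow> 's set) \<Rightarrow> (('s, 'g) xletter \<times> bool) list set" where
  "xrelators G \<iota> R n H Ssub =
     (map (\<lambda>(s, b). (Gen s, b))) ` R
   \<union> (\<Union>i\<in>{1..n}. (\<lambda>s. [(Sub i (\<iota> s), False), (Gen s, True)]) ` Ssub i)
   \<union> (\<Union>i\<in>{1..n}. {map (\<lambda>h. (Sub i h, True)) hs | hs.
          hs \<in> lists (H i) \<and> 1 \<le> length hs \<and> length hs \<le> 3 \<and>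
          foldr (\<otimes>\<^bsub>G\<^esub>) hs \<one>\<^bsub>G\<^esub> = \<one>\<^bsub>G\<^esub>})"

definition linear_isoperimetric ::
  "('g, 'm) monoid_scheme \<Rightarrow> ('s \<Rightarrow> 'g) \<Rightarrow> 's set \<Rightarrow> ('s \<times> bool) list set \<Rightarrow> nat \<Rightarrow> (nat \<Rightarrow> 'g set)
     \<Rightarrow> (nat \<Rightarrow> 's set) \<Rightarrow> real \<Rightarrow> bool" where
  "linear_isoperimetric G \<iota> S R n H Ssub K \<longleftrightarrow>
     (\<forall>w \<in> lists (xletters S n H \<times> UNIV).
        word_eval G (xval \<iota>) w = \<one>\<^bsub>G\<^esub> \<longrightarrow>
        (\<exists>N. real N \<le> K * real (length w) \<and> has_vk_diagram (xrelators G \<iota> R n H Ssub) w N))"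

end

theory Submission
  imports Defs
begin

text \<open>Read a word over the letters of \<open>X\<^sub>\<infinity>\<close> as a path in the Cayley graph of \<open>G\<close>
  and sum the increments of the potential \<open>y \<mapsto> \<parallel>y\<parallel>\<close> (word length over \<open>S\<^sub>i\<close>) along
  the edges labelled by letters of \<open>H\<^sub>i\<close>. This sum is unchanged by free reductions, the
  conjugate of a relator contributes at most 1 (relators of \<open>H\<^sub>i\<close> telescope to 0, those of
  \<open>\<R>\<close> contain no letter of \<open>H\<^sub>i\<close>, and \<open>\<tilde>s\<^sup>-\<^sup>1 s\<close> contributes a single step of a
  1-Lipschitz function), while the word \<open>\<tilde>a s\<^sup>-\<^sup>1\<close> contributes \<open>\<parallel>a\<parallel>\<close>. Hence \<open>\<parallel>a\<parallel>\<close> is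
  bounded by the number of cells of a diagram for this word of length 2, i.e. by \<open>2K\<close>.\<close>

lemma inv_word_Nil [simp]: "inv_word [] = []"
  by (simp add: inv_word_def)

lemma inv_word_Cons: "inv_word (c # u) = inv_word u @ [(fst c, \<not> snd c)]"
  by (cases c) (simp add: inv_word_def)

text \<open>Letter values outside the carrier are replaced by \<open>\<one>\<close>, so that every word,
  in particular every intermediate word of a free reduction, is read as a path in \<open>G\<close>.\<close>

definition carrier_val :: "('g, 'm) monoid_scheme \<Rightarrow> ('a \<Rightarrow> 'g) \<Rightarrow> 'a \<Rightarrow> 'g" where
  "carrier_val G \<phi> x = (if \<phi> x \<in> carrier G then \<phi> x else \<one>\<^bsub>G\<^esub>)"

definition signed_val :: "('g, 'm) monoid_scheme \<Rightarrow> ('a \<Rightarrow> 'g) \<Rightarrow> 'a \<times> bool \<Rightarrow> 'g" where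
  "signed_val G \<phi> c =
     (if snd c then carrier_val G \<phi> (fst c) else inv\<^bsub>G\<^esub> (carrier_val G \<phi> (fst c)))"

fun potential_increment :: "('g, 'm) monoid_scheme \<Rightarrow> ('a \<Rightarrow> 'g) \<Rightarrow> ('a \<Rightarrow> bool)
    \<Rightarrow> ('g \<Rightarrow> real) \<Rightarrow> 'g \<Rightarrow> ('a \<times> bool) list \<Rightarrow> real" where
  "potential_increment G \<phi> P f p [] = 0"
| "potential_increment G \<phi> P f p (c # w) =
     (if P (fst c) then f (p \<otimes>\<^bsub>G\<^esub> signed_val G \<phi> c) - f p else 0)
     + potential_increment G \<phi> P f (p \<otimes>\<^bsub>G\<^esub> signed_val G \<phi> c) w"

context group
begin

lemma carrier_val_closed [simp]: "carrier_val G \<phi> x \<in> carrier G"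
  by (simp add: carrier_val_def)

lemma signed_val_closed [simp]: "signed_val G \<phi> c \<in> carrier G"
  by (simp add: signed_val_def)

lemma signed_val_flip: "signed_val G \<phi> (x, \<not> b) = inv (signed_val G \<phi> (x, b))"
  by (simp add: signed_val_def)

lemma word_eval_Nil [simp]: "word_eval G \<phi> [] = \<one>"
  by (simp add: word_eval_def)

lemma word_eval_Cons:
  "word_eval G (carrier_val G \<phi>) (c # w) = signed_val G \<phi> c \<otimes> word_eval G (carrier_val G \<phi>) w"
  by (cases c) (simp add: word_eval_def signed_val_def)

lemma word_eval_closed [simp]: "word_eval G (carrier_val G \<phi>) w \<in> carrier G"
  by (induction w) (simp_all add: word_eval_Cons)

lemma word_eval_append:
  "word_eval G (carrier_val G \<phi>) (u @ v) =
     word_eval G (carrier_val G \<phi>) u \<otimes> word_eval G (carrier_val G \<phi>) v"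
  by (induction u) (simp_all add: word_eval_Cons m_assoc)

lemma word_eval_inv_word:
  "word_eval G (carrier_val G \<phi>) (inv_word u) = inv (word_eval G (carrier_val G \<phi>) u)"
proof (induction u)
  case (Cons c u)
  then show ?case
    by (cases c) (simp add: inv_word_Cons word_eval_append word_eval_Cons signed_val_flip
        inv_mult_group)
qed simp

lemma potential_increment_append:
  assumes "p \<in> carrier G"
  shows "potential_increment G \<phi> P f p (u @ v) =
    potential_increment G \<phi> P f p u
    + potential_increment G \<phi> P f (p \<otimes> word_eval G (carrier_val G \<phi>) u) v"
  using assms by (induction u arbitrary: p) (simp_all add: word_eval_Cons m_assoc)

lemma potential_increment_free_red_step:
  assumes "free_red_step u v" and "p \<in> carrier G"
  shows "potential_increment G \<phi> P f p u = potential_increment G \<phi> P f p v"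
proof -
  obtain a q x b where u: "u = a @ [(x, b), (x, \<not> b)] @ q" and v: "v = a @ q"
    using assms(1) unfolding free_red_step_def by blast
  have "potential_increment G \<phi> P f p' ([(x, b), (x, \<not> b)] @ q) = potential_increment G \<phi> P f p' q"
    if "p' \<in> carrier G" for p'
    using that by (simp add: signed_val_flip m_assoc)
  then show ?thesis
    using assms(2) by (simp add: u v potential_increment_append)
qed

lemma potential_increment_free_eq:
  assumes "free_eq u v" and "p \<in> carrier G"
  shows "potential_increment G \<phi> P f p u = potential_increment G \<phi> P f p v"
  using assms(1) unfolding free_eq_def
proof (induction rule: rtranclp_induct)
  case (step v w)
  then show ?case
    using potential_increment_free_red_step[OF _ assms(2)] by (metis conversep_iff sup2E)
qed simp

lemma potential_increment_inv_word:
  assumes "p \<in> carrier G"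
  shows "potential_increment G \<phi> P f p (inv_word u) =
    - potential_increment G \<phi> P f (p \<otimes> inv (word_eval G (carrier_val G \<phi>) u)) u"
  using assms
proof (induction u arbitrary: p)
  case (Cons c u)
  define U where "U = word_eval G (carrier_val G \<phi>) u"
  define l where "l = signed_val G \<phi> c"
  define q where "q = p \<otimes> inv U"
  have q: "q \<in> carrier G" and l: "l \<in> carrier G"
    using Cons.prems by (simp_all add: U_def l_def q_def)
  have flip: "signed_val G \<phi> (fst c, \<not> snd c) = inv l"
    by (cases c) (simp add: l_def signed_val_flip)
  have start: "p \<otimes> inv (l \<otimes> U) = q \<otimes> inv l"
    using Cons.prems l by (simp add: U_def q_def inv_mult_group m_assoc)
  have "potential_increment G \<phi> P f p (inv_word (c # u)) =
      - potential_increment G \<phi> P f q u + potential_increment G \<phi> P f q [(fst c, \<not> snd c)]"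
    using Cons by (simp add: inv_word_Cons potential_increment_append word_eval_inv_word U_def q_def)
  also have "\<dots> = - potential_increment G \<phi> P f (q \<otimes> inv l) (c # u)"
    using q l by (simp add: flip m_assoc l_def[symmetric])
  finally show ?case
    by (simp add: word_eval_Cons start l_def[symmetric] U_def[symmetric])
qed simp

lemma potential_increment_relator_conjugate:
  assumes "word_eval G (carrier_val G \<phi>) r = \<one>" and "p \<in> carrier G"
  shows "potential_increment G \<phi> P f p (u @ r @ inv_word u) =
    potential_increment G \<phi> P f (p \<otimes> word_eval G (carrier_val G \<phi>) u) r"
  using assms by (simp add: potential_increment_append potential_increment_inv_word
      word_eval_append m_assoc)

lemma potential_increment_conj_prod_le:
  assumes "\<forall>(u, r, e) \<in> set cs. word_eval G (carrier_val G \<phi>) r = \<one> \<and>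
             (\<forall>q \<in> carrier G. \<bar>potential_increment G \<phi> P f q r\<bar> \<le> 1)"
    and "p \<in> carrier G"
  shows "\<bar>potential_increment G \<phi> P f p (conj_prod cs)\<bar> \<le> length cs"
  using assms
proof (induction cs)
  case (Cons c cs)
  obtain u r e where c: "c = (u, r, e)" by (cases c)
  define r' where "r' = (if e then r else inv_word r)"
  have trivial: "word_eval G (carrier_val G \<phi>) r = \<one>"
    and bounded: "\<And>q. q \<in> carrier G \<Longrightarrow> \<bar>potential_increment G \<phi> P f q r\<bar> \<le> 1"
    using Cons.prems c by auto
  have trivial': "word_eval G (carrier_val G \<phi>) r' = \<one>"
    using trivial by (simp add: r'_def word_eval_inv_word)
  have block: "\<bar>potential_increment G \<phi> P f (p \<otimes> word_eval G (carrier_val G \<phi>) u) r'\<bar> \<le> 1"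
    using bounded trivial Cons.prems(2) by (simp add: r'_def potential_increment_inv_word)
  have "potential_increment G \<phi> P f p (conj_prod (c # cs)) =
      potential_increment G \<phi> P f (p \<otimes> word_eval G (carrier_val G \<phi>) u) r'
      + potential_increment G \<phi> P f p (conj_prod cs)"
  proof -
    have "conj_prod (c # cs) = (u @ r' @ inv_word u) @ conj_prod cs"
      by (simp add: conj_prod_def c r'_def)
    moreover have "word_eval G (carrier_val G \<phi>) (u @ r' @ inv_word u) = \<one>"
      using trivial' by (simp add: word_eval_append word_eval_inv_word)
    ultimately show ?thesis
      using potential_increment_append[OF Cons.prems(2), of \<phi> P f "u @ r' @ inv_word u"]
        potential_increment_relator_conjugate[OF trivial' Cons.prems(2)] Cons.prems(2) by simp
  qed
  moreover have "\<bar>potential_increment G \<phi> P f p (conj_prod cs)\<bar> \<le> length cs"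
    using Cons by simp
  ultimately show ?case
    using block by simp
qed (simp add: conj_prod_def)

lemma potential_increment_diagram_le:
  assumes "has_vk_diagram Rel w N"
    and "\<And>r q. r \<in> Rel \<Longrightarrow> q \<in> carrier G \<Longrightarrow>
           word_eval G (carrier_val G \<phi>) r = \<one> \<and> \<bar>potential_increment G \<phi> P f q r\<bar> \<le> 1"
    and "p \<in> carrier G"
  shows "\<bar>potential_increment G \<phi> P f p w\<bar> \<le> N"
proof -
  obtain cs where "length cs \<le> N" "\<forall>(u, r, e) \<in> set cs. r \<in> Rel" "free_eq w (conj_prod cs)"
    using assms(1) unfolding has_vk_diagram_def by blast
  then show ?thesis
    using potential_increment_conj_prod_le[of cs \<phi> P f p] assms(2,3)
      potential_increment_free_eq[OF _ assms(3)] by fastforce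
qed

lemma potential_increment_unmarked:
  "\<forall>c \<in> set w. \<not> P (fst c) \<Longrightarrow> potential_increment G \<phi> P f p w = 0"
  by (induction w arbitrary: p) auto

lemma potential_increment_all_marked:
  "p \<in> carrier G \<Longrightarrow> \<forall>c \<in> set w. P (fst c) \<Longrightarrow>
     potential_increment G \<phi> P f p w = f (p \<otimes> word_eval G (carrier_val G \<phi>) w) - f p"
  by (induction w arbitrary: p) (simp_all add: word_eval_Cons m_assoc)

end

definition letter_prod :: "('g, 'm) monoid_scheme \<Rightarrow> ('s \<Rightarrow> 'g) \<Rightarrow> 's list \<Rightarrow> 'g" where
  "letter_prod G \<iota> ws = foldr (\<lambda>s acc. \<iota> s \<otimes>\<^bsub>G\<^esub> acc) ws \<one>\<^bsub>G\<^esub>"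

lemma word_length_eq_Least:
  "word_length G \<iota> A y = (LEAST k. \<exists>ws \<in> lists A. length ws = k \<and> letter_prod G \<iota> ws = y)"
  by (simp add: word_length_def letter_prod_def)

lemma word_length_le: "ws \<in> lists A \<Longrightarrow> word_length G \<iota> A (letter_prod G \<iota> ws) \<le> length ws"
  unfolding word_length_eq_Least by (rule Least_le) blast

lemma word_length_attained:
  "y \<in> letter_prod G \<iota> ` lists A \<Longrightarrow>
     \<exists>ws \<in> lists A. length ws = word_length G \<iota> A y \<and> letter_prod G \<iota> ws = y"
  unfolding word_length_eq_Least by (rule LeastI_ex) blast

context group
begin

lemma word_length_one: "word_length G \<iota> A \<one> = 0"
  using word_length_le[of "[]" A G \<iota>] by (simp add: letter_prod_def)

lemma letter_prod_closed:
  "\<iota> ` A \<subseteq> carrier G \<Longrightarrow> ws \<in> lists A \<Longrightarrow> letter_prod G \<iota> ws \<in> carrier G"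
  by (induction ws) (auto simp: letter_prod_def)

lemma letter_prod_snoc:
  "\<iota> ` A \<subseteq> carrier G \<Longrightarrow> ws \<in> lists A \<Longrightarrow> u \<in> A \<Longrightarrow>
     letter_prod G \<iota> (ws @ [u]) = letter_prod G \<iota> ws \<otimes> \<iota> u"
proof (induction ws)
  case (Cons a ws)
  then have "letter_prod G \<iota> ws \<in> carrier G" and "\<iota> a \<in> carrier G" and "\<iota> u \<in> carrier G"
    using letter_prod_closed by auto
  with Cons show ?case by (simp add: letter_prod_def m_assoc)
qed (simp add: letter_prod_def image_subset_iff)

lemma letter_prod_mult_letter:
  assumes "\<iota> ` A \<subseteq> carrier G" and "y \<in> letter_prod G \<iota> ` lists A" and "u \<in> A"
  shows "y \<otimes> \<iota> u \<in> letter_prod G \<iota> ` lists A"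
    and "word_length G \<iota> A (y \<otimes> \<iota> u) \<le> word_length G \<iota> A y + 1"
proof -
  obtain ws where ws: "ws \<in> lists A" "length ws = word_length G \<iota> A y" "letter_prod G \<iota> ws = y"
    using word_length_attained[OF assms(2)] by blast
  have prod: "letter_prod G \<iota> (ws @ [u]) = y \<otimes> \<iota> u" and word: "ws @ [u] \<in> lists A"
    using letter_prod_snoc[OF assms(1) ws(1) assms(3)] ws(3) assms(3) ws(1) by auto
  show "y \<otimes> \<iota> u \<in> letter_prod G \<iota> ` lists A"
    using prod word by (metis image_eqI)
  show "word_length G \<iota> A (y \<otimes> \<iota> u) \<le> word_length G \<iota> A y + 1"
    using word_length_le[OF word, of G \<iota>] prod ws(2) by simp
qed

text \<open>Off \<open>letter_prod G \<iota> ` lists A\<close> the word length is the junk value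
  \<open>LEAST k. False\<close>; the Lipschitz bound survives because this set is invariant under
  right multiplication by \<open>\<iota> t\<close>.\<close>

lemma word_length_lipschitz:
  assumes "\<iota> ` A \<subseteq> carrier G" and "symmetric_alph G \<iota> A" and "t \<in> A" and "y \<in> carrier G"
  shows "\<bar>real (word_length G \<iota> A (y \<otimes> inv (\<iota> t))) - real (word_length G \<iota> A y)\<bar> \<le> 1"
proof -
  let ?W = "letter_prod G \<iota> ` lists A"
  obtain t' where t': "t' \<in> A" "\<iota> t' = inv (\<iota> t)"
    using assms(2,3) unfolding symmetric_alph_def by blast
  have cancel: "y \<otimes> inv (\<iota> t) \<otimes> \<iota> t = y"
    using assms(1,3,4) by (auto simp: m_assoc)
  show ?thesis
  proof (cases "y \<in> ?W")
    case True
    then have "y \<otimes> inv (\<iota> t) \<in> ?W"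
      and "word_length G \<iota> A (y \<otimes> inv (\<iota> t)) \<le> word_length G \<iota> A y + 1"
      using letter_prod_mult_letter[OF assms(1) _ t'(1)] t'(2) by auto
    moreover have "word_length G \<iota> A y \<le> word_length G \<iota> A (y \<otimes> inv (\<iota> t)) + 1"
      using letter_prod_mult_letter(2)[OF assms(1) calculation(1) assms(3)] cancel by simp
    ultimately show ?thesis by linarith
  next
    case False
    then have "y \<otimes> inv (\<iota> t) \<notin> ?W"
      using letter_prod_mult_letter(1)[OF assms(1) _ assms(3)] cancel by metis
    with False have "word_length G \<iota> A (y \<otimes> inv (\<iota> t)) = word_length G \<iota> A y"
      unfolding word_length_eq_Least by (metis image_eqI)
    then show ?thesis by simp
  qed
qed

end

fun in_factor :: "nat \<Rightarrow> ('s, 'g) xletter \<Rightarrow> bool" where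
  "in_factor i (Gen s) = False"
| "in_factor i (Sub j h) = (j = i)"

lemma presentation_relator_trivial:
  assumes "is_presentation G \<iota> S R" and "r \<in> R"
  shows "word_eval G \<iota> r = \<one>\<^bsub>G\<^esub>"
proof -
  have "has_vk_diagram R r 1"
    unfolding has_vk_diagram_def
    by (rule exI[of _ "[([], r, True)]"]) (simp add: assms(2) conj_prod_def free_eq_def)
  then show ?thesis
    using assms unfolding is_presentation_def by blast
qed

lemma (in group) word_eval_lift_generators:
  "\<iota> ` S \<subseteq> carrier G \<Longrightarrow> r \<in> lists (S \<times> UNIV) \<Longrightarrow>
     word_eval G (carrier_val G (xval \<iota>)) (map (\<lambda>(s, b). (Gen s, b)) r) = word_eval G \<iota> r"
  by (induction r) (auto simp: word_eval_def carrier_val_def)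

lemma (in group) word_eval_subgroup_letters:
  "set hs \<subseteq> carrier G \<Longrightarrow>
     word_eval G (carrier_val G (xval \<iota>)) (map (\<lambda>h. (Sub j h, True)) hs) = foldr (\<otimes>) hs \<one>"
  by (induction hs) (auto simp: word_eval_def carrier_val_def)

locale relative_presentation = group +
  fixes \<iota> :: "'s \<Rightarrow> 'a" and S :: "'s set" and R :: "('s \<times> bool) list set"
    and n :: nat and H :: "nat \<Rightarrow> 'a set" and Ssub :: "nat \<Rightarrow> 's set"
  assumes generators_closed: "\<iota> ` S \<subseteq> carrier G"
    and relators_words: "R \<subseteq> lists (S \<times> UNIV)"
    and relators_trivial: "r \<in> R \<Longrightarrow> word_eval G \<iota> r = \<one>"
    and subgroups_closed: "j \<in> {1..n} \<Longrightarrow> H j \<subseteq> carrier G"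
    and subgroup_generators: "j \<in> {1..n} \<Longrightarrow> Ssub j \<subseteq> S"
begin

lemma xrelator_potential_increment:
  assumes lipschitz: "\<And>y t. y \<in> carrier G \<Longrightarrow> t \<in> Ssub i \<Longrightarrow> \<bar>f (y \<otimes> inv (\<iota> t)) - f y\<bar> \<le> 1"
    and r: "r \<in> xrelators G \<iota> R n H Ssub" and q: "q \<in> carrier G"
  shows "word_eval G (carrier_val G (xval \<iota>)) r = \<one>
    \<and> \<bar>potential_increment G (xval \<iota>) (in_factor i) f q r\<bar> \<le> 1"
proof -
  consider (lifted) r0 where "r0 \<in> R" "r = map (\<lambda>(s, b). (Gen s, b)) r0"
    | (generator) j t where "j \<in> {1..n}" "t \<in> Ssub j" "r = [(Sub j (\<iota> t), False), (Gen t, True)]"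
    | (subgroup) j hs where "j \<in> {1..n}" "hs \<in> lists (H j)" "foldr (\<otimes>) hs \<one> = \<one>"
        "r = map (\<lambda>h. (Sub j h, True)) hs"
    using r unfolding xrelators_def by blast
  then show ?thesis
  proof cases
    case lifted
    have "word_eval G (carrier_val G (xval \<iota>)) r = word_eval G \<iota> r0"
      using lifted relators_words generators_closed by (auto intro: word_eval_lift_generators)
    moreover have "potential_increment G (xval \<iota>) (in_factor i) f q r = 0"
      by (rule potential_increment_unmarked) (auto simp: lifted)
    ultimately show ?thesis
      using relators_trivial lifted by simp
  next
    case generator
    have t: "\<iota> t \<in> carrier G"
      using generator generators_closed subgroup_generators by blast
    have "\<bar>f (q \<otimes> inv (\<iota> t)) - f q\<bar> \<le> 1" if "j = i"
      using lipschitz[OF q] generator that by blast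
    then show ?thesis
      using t by (auto simp: generator word_eval_Cons signed_val_def carrier_val_def)
  next
    case subgroup
    have "set hs \<subseteq> carrier G"
      using subgroup subgroups_closed by auto
    then have "word_eval G (carrier_val G (xval \<iota>)) r = foldr (\<otimes>) hs \<one>"
      by (simp add: subgroup(4) word_eval_subgroup_letters)
    moreover have "potential_increment G (xval \<iota>) (in_factor i) f q r = 0"
    proof (cases "j = i")
      case True
      then show ?thesis
        using potential_increment_all_marked[OF q, of r] q calculation subgroup(3,4) by auto
    next
      case False
      then show ?thesis
        by (intro potential_increment_unmarked) (auto simp: subgroup)
    qed
    ultimately show ?thesis
      using subgroup(3) by simp
  qed
qed

lemma lipschitz_potential_diff_le_diagram:
  fixes f :: "'a \<Rightarrow> real"
  assumes "\<And>y t. y \<in> carrier G \<Longrightarrow> t \<in> Ssub i \<Longrightarrow> \<bar>f (y \<otimes> inv (\<iota> t)) - f y\<bar> \<le> 1"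
    and "s \<in> S"
    and "has_vk_diagram (xrelators G \<iota> R n H Ssub) [(Sub i (\<iota> s), True), (Gen s, False)] N"
  shows "\<bar>f (\<iota> s) - f \<one>\<bar> \<le> N"
proof -
  have "\<bar>potential_increment G (xval \<iota>) (in_factor i) f \<one> [(Sub i (\<iota> s), True), (Gen s, False)]\<bar> \<le> N"
    using potential_increment_diagram_le[OF assms(3)] xrelator_potential_increment[OF assms(1)]
    by blast
  moreover have "\<iota> s \<in> carrier G"
    using assms(2) generators_closed by blast
  ultimately show ?thesis
    by (simp add: signed_val_def carrier_val_def)
qed

end

theorem lemma3p4:
  fixes G :: "('g, 'm) monoid_scheme" and \<iota> :: "'s \<Rightarrow> 'g" and S :: "'s set"
    and R :: "('s \<times> bool) list set" and n :: nat and H :: "nat \<Rightarrow> 'g set"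
    and Ssub :: "nat \<Rightarrow> 's set" and K :: real
  assumes "group G"
    and "finite S" and "symmetric_alph G \<iota> S"
    and "finite R" and "\<forall>r\<in>R. length r = 2 \<or> length r = 3"
    and "is_presentation G \<iota> S R"
    and "\<forall>i\<in>{1..n}. subgroup (H i) G"
    and "\<forall>i\<in>{1..n}. Ssub i \<subseteq> S \<and> symmetric_alph G \<iota> (Ssub i) \<and>
           generate G (\<iota> ` Ssub i) = H i"
    and "linear_isoperimetric G \<iota> S R n H Ssub K"
    and "i \<in> {1..n}" and "s \<in> S" and "\<iota> s \<in> H i"
  shows "real (word_length G \<iota> (Ssub i) (\<iota> s)) \<le> 12 * K"
proof -
  interpret relative_presentation G \<iota> S R n H Ssub
    using assms(7,8) presentation_relator_trivial[OF assms(6)] assms(6)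
    by (intro relative_presentation.intro[OF assms(1)] relative_presentation_axioms.intro)
      (auto simp: is_presentation_def subgroup.subset)
  define w where "w = [(Sub i (\<iota> s), True), (Gen s, False)]"
  have "w \<in> lists (xletters S n H \<times> UNIV)"
    using assms(10-12) by (auto simp: w_def xletters_def)
  moreover have "word_eval G (xval \<iota>) w = \<one>\<^bsub>G\<^esub>"
    using generators_closed assms(11) by (auto simp: w_def word_eval_def)
  ultimately obtain N where N: "real N \<le> K * real (length w)"
    and diagram: "has_vk_diagram (xrelators G \<iota> R n H Ssub) w N"
    using assms(9) unfolding linear_isoperimetric_def by blast
  have "\<iota> ` Ssub i \<subseteq> carrier G"
    using generators_closed subgroup_generators[OF assms(10)] by blast
  moreover have "symmetric_alph G \<iota> (Ssub i)"
    using assms(8,10) by blast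
  ultimately have "\<bar>real (word_length G \<iota> (Ssub i) (y \<otimes>\<^bsub>G\<^esub> inv\<^bsub>G\<^esub> \<iota> t))
      - real (word_length G \<iota> (Ssub i) y)\<bar> \<le> 1"
    if "y \<in> carrier G" and "t \<in> Ssub i" for y t
    by (rule word_length_lipschitz[OF _ _ that(2,1)])
  then have "\<bar>real (word_length G \<iota> (Ssub i) (\<iota> s))
      - real (word_length G \<iota> (Ssub i) \<one>\<^bsub>G\<^esub>)\<bar> \<le> N"
    by (rule lipschitz_potential_diff_le_diagram[OF _ assms(11) diagram[unfolded w_def]])
  with N show ?thesis
    by (simp add: word_length_one w_def)
qed

end
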